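(* Let $G$ be a SIN topological group and $\xi=(E\xrightarrow{p}X)$ a numerable principal $G$-bundle with gauge group $\mathcal G$. Then $\mathcal G$, endowed with the uniform structure $\mathbf U_{\mathcal G}$, is a topological group. Moreover, $\mathcal G$ is then SIN.
   Context: A topological group is SIN if its identity element has a fundamental system of neighbourhoods invariant under conjugation. The gauge group $\mathcal G$ is the group of $G$-equivariant homeomorphisms $\chi:E\to E$ with $p\circ\chi=p$. Let $\gamma:E\times_XE\to G$ be defined by $y=z\cdot\gamma(y,z)$. Let $\mathcal V_G$ be the set of open sets $V\subset G$ containing the identity with $V=V^{-1}$. For $K\subset X$ compact and $V\in\mathcal V_G$ let $\mathcal O^{\mathcal G}(K,V)=\{(\chi,\tilde\chi)\in\mathcal G\times\mathcal G:\gamma(\chi(z),\tilde\chi(z))\in V\ \forall z\in p^{-1}(K)\}$. $\mathbf U_{\mathcal G}$ is the uniform structure on $\mathcal G$ having these sets as a fundamental system of entourages; $\mathcal G$ carries the induced topology. *)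

theory Defs
  imports "HOL-Analysis.Analysis"
begin

(* The structure group G is a type 'g of class topological_group_add
   (group written additively, not necessarily commutative; no separation axiom). *)

definition nbhd_of :: "'a topology \<Rightarrow> 'a \<Rightarrow> 'a set \<Rightarrow> bool" where
  "nbhd_of T e N \<longleftrightarrow> (\<exists>U. openin T U \<and> e \<in> U \<and> U \<subseteq> N)"

definition topological_group_on ::
  "'a topology \<Rightarrow> ('a \<Rightarrow> 'a \<Rightarrow> 'a) \<Rightarrow> ('a \<Rightarrow> 'a) \<Rightarrow> 'a \<Rightarrow> bool" where
  "topological_group_on T m i e \<longleftrightarrow>
     e \<in> topspace T \<and>
     (\<forall>a\<in>topspace T. \<forall>b\<in>topspace T. \<forall>c\<in>topspace T. m (m a b) c = m a (m b c)) \<and>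
     (\<forall>a\<in>topspace T. m e a = a \<and> m a e = a \<and> m (i a) a = e \<and> m a (i a) = e) \<and>
     continuous_map (prod_topology T T) T (\<lambda>(a, b). m a b) \<and>
     continuous_map T T i"

definition SIN_on ::
  "'a topology \<Rightarrow> ('a \<Rightarrow> 'a \<Rightarrow> 'a) \<Rightarrow> ('a \<Rightarrow> 'a) \<Rightarrow> 'a \<Rightarrow> bool" where
  "SIN_on T m i e \<longleftrightarrow>
     (\<forall>N. nbhd_of T e N \<longrightarrow>
        (\<exists>W. nbhd_of T e W \<and> W \<subseteq> N \<and>
             (\<forall>g\<in>topspace T. (\<lambda>w. m (m g w) (i g)) ` W = W)))"

definition right_action :: "('e::topological_space \<Rightarrow> 'g::topological_group_add \<Rightarrow> 'e) \<Rightarrow> bool" where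
  "right_action act \<longleftrightarrow>
     (\<forall>z. act z 0 = z) \<and> (\<forall>z g h. act (act z g) h = act z (g + h)) \<and>
     continuous_on UNIV (\<lambda>(z, g). act z g)"

definition trivial_over ::
  "('e::topological_space \<Rightarrow> 'x::topological_space) \<Rightarrow> ('e \<Rightarrow> 'g::topological_group_add \<Rightarrow> 'e)
   \<Rightarrow> 'x set \<Rightarrow> bool" where
  "trivial_over p act U \<longleftrightarrow>
     (\<exists>\<phi> \<psi>. homeomorphism (U \<times> (UNIV :: 'g set)) (p -` U) \<phi> \<psi> \<and>
        (\<forall>x\<in>U. \<forall>g. p (\<phi> (x, g)) = x) \<and>
        (\<forall>x\<in>U. \<forall>g h. \<phi> (x, g + h) = act (\<phi> (x, g)) h))"

definition principal_bundle ::
  "('e::topological_space \<Rightarrow> 'x::topological_space) \<Rightarrow> ('e \<Rightarrow> 'g::topological_group_add \<Rightarrow> 'e) \<Rightarrow> bool" where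
  "principal_bundle p act \<longleftrightarrow>
     right_action act \<and> continuous_on UNIV p \<and>
     (\<forall>z g. p (act z g) = p z) \<and>
     (\<forall>x. \<exists>U. open U \<and> x \<in> U \<and> trivial_over p act U)"

definition numerable_cover :: "'x::topological_space set set \<Rightarrow> bool" where
  "numerable_cover \<U> \<longleftrightarrow>
     (\<forall>U\<in>\<U>. open U) \<and>
     (\<exists>f :: 'x set \<Rightarrow> 'x \<Rightarrow> real.
        (\<forall>U\<in>\<U>. continuous_on UNIV (f U) \<and> (\<forall>x. 0 \<le> f U x) \<and> {x. 0 < f U x} \<subseteq> U) \<and>
        (\<forall>x. \<exists>N. open N \<and> x \<in> N \<and> finite {U\<in>\<U>. \<exists>y\<in>N. f U y \<noteq> 0}) \<and>
        (\<forall>x. (\<Sum>U\<in>{U\<in>\<U>. f U x \<noteq> 0}. f U x) = 1))"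

definition numerable_principal_bundle ::
  "('e::topological_space \<Rightarrow> 'x::topological_space) \<Rightarrow> ('e \<Rightarrow> 'g::topological_group_add \<Rightarrow> 'e) \<Rightarrow> bool" where
  "numerable_principal_bundle p act \<longleftrightarrow>
     principal_bundle p act \<and>
     (\<exists>\<U>. numerable_cover \<U> \<and> (\<forall>U\<in>\<U>. trivial_over p act U))"

definition gamma :: "('e \<Rightarrow> 'g \<Rightarrow> 'e) \<Rightarrow> 'e \<Rightarrow> 'e \<Rightarrow> 'g" where
  "gamma act y z = (THE g. y = act z g)"

definition gauge_group :: "('e::topological_space \<Rightarrow> 'x) \<Rightarrow> ('e \<Rightarrow> 'g \<Rightarrow> 'e) \<Rightarrow> ('e \<Rightarrow> 'e) set" where
  "gauge_group p act = {c. (\<exists>\<psi>. homeomorphism UNIV UNIV c \<psi>) \<and>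
                      (\<forall>z g. c (act z g) = act (c z) g) \<and> p \<circ> c = p}"

definition VG :: "'g::topological_group_add set set" where
  "VG = {V. open V \<and> 0 \<in> V \<and> uminus ` V = V}"

definition gauge_entourage ::
  "('e::topological_space \<Rightarrow> 'x) \<Rightarrow> ('e \<Rightarrow> 'g \<Rightarrow> 'e) \<Rightarrow> 'x set \<Rightarrow> 'g set \<Rightarrow> (('e \<Rightarrow> 'e) \<times> ('e \<Rightarrow> 'e)) set" where
  "gauge_entourage p act K V =
     {(c, c'). c \<in> gauge_group p act \<and> c' \<in> gauge_group p act \<and>
                (\<forall>z \<in> p -` K. gamma act (c z) (c' z) \<in> V)}"

(* openness in the topology induced by the uniform structure U_G generated by the
   fundamental system of entourages O^G(K,V), K \<subseteq> X compact, V \<in> V_G *)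
definition gauge_open ::
  "('e::topological_space \<Rightarrow> 'x::topological_space) \<Rightarrow> ('e \<Rightarrow> 'g::topological_group_add \<Rightarrow> 'e) \<Rightarrow> ('e \<Rightarrow> 'e) set \<Rightarrow> bool" where
  "gauge_open p act S \<longleftrightarrow>
     S \<subseteq> gauge_group p act \<and>
     (\<forall>c\<in>S. \<exists>K V. compact K \<and> V \<in> VG \<and> {c'. (c, c') \<in> gauge_entourage p act K V} \<subseteq> S)"

definition gauge_topology ::
  "('e::topological_space \<Rightarrow> 'x::topological_space) \<Rightarrow> ('e \<Rightarrow> 'g::topological_group_add \<Rightarrow> 'e) \<Rightarrow> ('e \<Rightarrow> 'e) topology" where
  "gauge_topology p act = topology (gauge_open p act)"

end

theory Submission
  imports Defs
begin

text \<open>Since gauge transformations are \<open>G\<close>-equivariant and the entourage condition is imposed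
on the whole \<open>G\<close>-invariant set \<open>p\<^sup>-\<^sup>1(K)\<close>, the defining estimates compose: if
\<open>a z = d\<^sub>1 z \<cdot> h\<^sub>1\<close> and \<open>b z = d\<^sub>2 z \<cdot> h\<^sub>2\<close> on \<open>p\<^sup>-\<^sup>1(K)\<close>, then
\<open>a (b z) = d\<^sub>1 (d\<^sub>2 z) \<cdot> (h\<^sub>2 + h\<^sub>1)\<close>; inverting a gauge transformation replaces \<open>h\<close> by \<open>-h\<close>;
and a ball \<open>O(K,V)\<close> around the identity is mapped onto itself by every conjugation
\<open>c \<mapsto> b \<circ> c \<circ> b\<^sup>-\<^sup>1\<close>. Choosing \<open>W \<in> V\<^sub>G\<close> with \<open>W + W \<subseteq> V\<close> then gives continuity of
composition and inversion, and the balls around the identity are the required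
conjugation-invariant neighbourhoods.\<close>

lemma VG_halving:
  fixes V :: "'g::topological_group_add set"
  assumes "V \<in> VG"
  shows "\<exists>W\<in>VG. \<forall>a\<in>W. \<forall>b\<in>W. a + b \<in> V"
proof -
  have V: "open V" "0 \<in> V" using assms by (auto simp: VG_def)
  have "((\<lambda>x. fst x + snd x) \<longlongrightarrow> (0::'g) + 0) (nhds 0 \<times>\<^sub>F nhds 0)"
    by (rule tendsto_add_Pair)
  then have "eventually (\<lambda>x. fst x + snd x \<in> V) (nhds 0 \<times>\<^sub>F nhds (0::'g))"
    using V by (simp add: tendsto_def)
  then obtain P Q where PQ: "eventually P (nhds (0::'g))" "eventually Q (nhds 0)"
    "\<forall>x y. P x \<longrightarrow> Q y \<longrightarrow> x + y \<in> V"
    unfolding eventually_prod_filter by auto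
  obtain A where A: "open A" "0 \<in> A" "\<forall>x\<in>A. P x" using PQ(1) unfolding eventually_nhds by auto
  obtain B where B: "open B" "0 \<in> B" "\<forall>x\<in>B. Q x" using PQ(2) unfolding eventually_nhds by auto
  define W where "W = (A \<inter> B) \<inter> uminus -` (A \<inter> B)"
  have "open (uminus -` S :: 'g set)" if "open S" for S
    using that continuous_on_open_vimage[of UNIV "uminus :: 'g \<Rightarrow> 'g"]
    by (auto intro: continuous_intros)
  then have "open W" unfolding W_def using A B by auto
  moreover have "uminus ` W = W"
    unfolding W_def by (force simp: image_iff)
  ultimately have "W \<in> VG" using A B by (simp add: VG_def W_def)
  moreover have "\<forall>a\<in>W. \<forall>b\<in>W. a + b \<in> V" using A B PQ(3) by (auto simp: W_def)
  ultimately show ?thesis by blast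
qed

lemma VG_Int: "V \<in> VG \<Longrightarrow> V' \<in> VG \<Longrightarrow> V \<inter> V' \<in> VG"
  unfolding VG_def by (auto simp: image_Int inj_def)

lemma UNIV_in_VG: "UNIV \<in> VG"
  unfolding VG_def by (auto intro: surjI[of uminus uminus])

lemma principal_bundle_act_0: "principal_bundle p act \<Longrightarrow> act z 0 = z"
  and principal_bundle_act_add: "principal_bundle p act \<Longrightarrow> act (act z g) h = act z (g + h)"
  unfolding principal_bundle_def right_action_def by auto

lemma principal_bundle_fibres:
  fixes p :: "'e::topological_space \<Rightarrow> 'x::topological_space"
    and act :: "'e \<Rightarrow> 'g::topological_group_add \<Rightarrow> 'e"
  assumes "principal_bundle p act"
  shows principal_bundle_transitive: "p y = p z \<Longrightarrow> \<exists>g. y = act z g"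
    and principal_bundle_free: "act z g = act z h \<Longrightarrow> g = h"
proof -
  obtain U where U: "p z \<in> U" "trivial_over p act U"
    using assms unfolding principal_bundle_def by blast
  then obtain \<phi> \<psi> where hom: "homeomorphism (U \<times> (UNIV :: 'g set)) (p -` U) \<phi> \<psi>"
    and over: "\<forall>x\<in>U. \<forall>g. p (\<phi> (x, g)) = x"
    and equiv: "\<forall>x\<in>U. \<forall>g h. \<phi> (x, g + h) = act (\<phi> (x, g)) h"
    unfolding trivial_over_def by blast
  have chart: "w = \<phi> (p w, snd (\<psi> w))" if "p w \<in> U" for w
  proof -
    have "w \<in> p -` U" using that by simp
    then have "\<psi> w \<in> U \<times> UNIV" "\<phi> (\<psi> w) = w" using hom unfolding homeomorphism_def by blast+
    then obtain u k where "\<psi> w = (u, k)" "u \<in> U" "\<phi> (u, k) = w" by (metis SigmaE)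
    then show ?thesis using over by auto
  qed
  obtain g\<^sub>0 where z: "z = \<phi> (p z, g\<^sub>0)" using chart U(1) by blast
  show "\<exists>g. y = act z g" if same_fibre: "p y = p z"
  proof -
    obtain g\<^sub>1 where y: "y = \<phi> (p z, g\<^sub>1)" using chart[of y] U(1) same_fibre by auto
    have "\<phi> (p z, g\<^sub>0 + (- g\<^sub>0 + g\<^sub>1)) = act (\<phi> (p z, g\<^sub>0)) (- g\<^sub>0 + g\<^sub>1)" using equiv U(1) by blast
    then have "y = act z (- g\<^sub>0 + g\<^sub>1)" using y z by (simp add: add.assoc[symmetric])
    then show ?thesis ..
  qed
  show "g = h" if "act z g = act z h"
  proof -
    have "\<phi> (p z, g\<^sub>0 + g) = \<phi> (p z, g\<^sub>0 + h)" using equiv U(1) z that by metis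
    then have "\<psi> (\<phi> (p z, g\<^sub>0 + g)) = \<psi> (\<phi> (p z, g\<^sub>0 + h))" by simp
    then show ?thesis using hom U(1) unfolding homeomorphism_def by auto
  qed
qed

lemma gamma_act:
  assumes "principal_bundle p act"
  shows "gamma act (act z g) z = g"
  unfolding gamma_def using principal_bundle_free[OF assms] by (intro the_equality) auto

lemma act_gamma:
  assumes "principal_bundle p act" "p y = p z"
  shows "act z (gamma act y z) = y"
  using principal_bundle_transitive[OF assms] gamma_act[OF assms(1)] by metis

lemma gauge_groupD:
  assumes "c \<in> gauge_group p act"
  shows gauge_group_bij: "bij c"
    and gauge_group_over: "p (c z) = p z"
    and gauge_group_equivariant: "c (act z g) = act (c z) g"
proof -
  obtain \<psi> where "homeomorphism UNIV UNIV c \<psi>" using assms unfolding gauge_group_def by auto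
  then have "\<psi> (c x) = x" "c (\<psi> x) = x" for x unfolding homeomorphism_def by auto
  then show "bij c" by (metis bijI')
  show "p (c z) = p z" "c (act z g) = act (c z) g"
    using assms unfolding gauge_group_def by (auto simp: fun_eq_iff)
qed

lemma gauge_group_id: "id \<in> gauge_group p act"
  unfolding gauge_group_def homeomorphism_def by auto

lemma gauge_group_comp:
  assumes "c \<in> gauge_group p act" "d \<in> gauge_group p act"
  shows "c \<circ> d \<in> gauge_group p act"
proof -
  obtain \<psi> \<psi>' where "homeomorphism UNIV UNIV c \<psi>" "homeomorphism UNIV UNIV d \<psi>'"
    using assms unfolding gauge_group_def by auto
  then have "homeomorphism UNIV UNIV (c \<circ> d) (\<psi>' \<circ> \<psi>)"
    using homeomorphism_compose by blast
  then show ?thesis using assms unfolding gauge_group_def by (auto simp: fun_eq_iff)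
qed

lemma gauge_group_inv:
  assumes "c \<in> gauge_group p act"
  shows "inv c \<in> gauge_group p act"
proof -
  obtain \<psi> where hom: "homeomorphism UNIV UNIV c \<psi>" using assms unfolding gauge_group_def by auto
  then have "inv c = \<psi>" unfolding homeomorphism_def by (metis UNIV_I ext inv_equality)
  then have "homeomorphism UNIV UNIV (inv c) c" using hom homeomorphism_sym by metis
  moreover have "inv c (act z g) = act (inv c z) g" "p (inv c z) = p z" for z g
    using gauge_groupD[OF assms] bij_inv_eq_iff[of c] by metis+
  ultimately show ?thesis unfolding gauge_group_def by (auto simp: fun_eq_iff)
qed

definition gauge_ball ::
  "('e::topological_space \<Rightarrow> 'x) \<Rightarrow> ('e \<Rightarrow> 'g \<Rightarrow> 'e) \<Rightarrow> ('e \<Rightarrow> 'e) \<Rightarrow> 'x set \<Rightarrow> 'g set \<Rightarrow> ('e \<Rightarrow> 'e) set"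
  where "gauge_ball p act c K V = {c'. (c, c') \<in> gauge_entourage p act K V}"

lemma gauge_open_iff:
  "gauge_open p act S \<longleftrightarrow> S \<subseteq> gauge_group p act \<and>
     (\<forall>c\<in>S. \<exists>K V. compact K \<and> V \<in> VG \<and> gauge_ball p act c K V \<subseteq> S)"
  unfolding gauge_open_def gauge_ball_def ..

lemma mem_gauge_ball:
  assumes "principal_bundle p act"
  shows "c' \<in> gauge_ball p act c K V \<longleftrightarrow> c \<in> gauge_group p act \<and> c' \<in> gauge_group p act \<and>
           (\<forall>z. p z \<in> K \<longrightarrow> (\<exists>g\<in>V. c z = act (c' z) g))"
proof -
  have "gamma act (c z) (c' z) \<in> V \<longleftrightarrow> (\<exists>g\<in>V. c z = act (c' z) g)"
    if "c \<in> gauge_group p act" "c' \<in> gauge_group p act" for z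
    using act_gamma[OF assms] gamma_act[OF assms] gauge_group_over[OF that(1)]
      gauge_group_over[OF that(2)] by metis
  then show ?thesis unfolding gauge_ball_def gauge_entourage_def by auto
qed

lemma gauge_ball_mono:
  "K' \<subseteq> K \<Longrightarrow> V \<subseteq> V' \<Longrightarrow> gauge_ball p act c K V \<subseteq> gauge_ball p act c K' V'"
  unfolding gauge_ball_def gauge_entourage_def by auto

lemma gauge_ball_self:
  assumes "principal_bundle p act" "c \<in> gauge_group p act" "V \<in> VG"
  shows "c \<in> gauge_ball p act c K V"
  using assms principal_bundle_act_0[OF assms(1)]
  by (auto simp: mem_gauge_ball VG_def intro!: bexI[of _ 0])

lemma gauge_ball_trans:
  assumes "principal_bundle p act" "d \<in> gauge_ball p act c K W" "e \<in> gauge_ball p act d K W"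
    and "\<forall>a\<in>W. \<forall>b\<in>W. a + b \<in> V"
  shows "e \<in> gauge_ball p act c K V"
proof -
  have "\<exists>g\<in>V. c z = act (e z) g" if z: "p z \<in> K" for z
  proof -
    obtain g\<^sub>1 where "g\<^sub>1 \<in> W" "c z = act (d z) g\<^sub>1"
      using assms(2) z unfolding mem_gauge_ball[OF assms(1)] by blast
    moreover obtain g\<^sub>2 where "g\<^sub>2 \<in> W" "d z = act (e z) g\<^sub>2"
      using assms(3) z unfolding mem_gauge_ball[OF assms(1)] by blast
    ultimately show ?thesis using assms(4) principal_bundle_act_add[OF assms(1)] by auto
  qed
  then show ?thesis using assms(2,3) unfolding mem_gauge_ball[OF assms(1)] by blast
qed

lemma gauge_ball_comp:
  assumes pb: "principal_bundle p act"
    and d\<^sub>1: "d\<^sub>1 \<in> gauge_ball p act a K W" and d\<^sub>2: "d\<^sub>2 \<in> gauge_ball p act b K W"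
    and W: "\<forall>x\<in>W. \<forall>y\<in>W. x + y \<in> V"
  shows "d\<^sub>1 \<circ> d\<^sub>2 \<in> gauge_ball p act (a \<circ> b) K V"
proof -
  have G: "a \<in> gauge_group p act" "b \<in> gauge_group p act"
    "d\<^sub>1 \<in> gauge_group p act" "d\<^sub>2 \<in> gauge_group p act"
    using d\<^sub>1 d\<^sub>2 by (auto simp: mem_gauge_ball[OF pb])
  have "\<exists>g\<in>V. a (b z) = act (d\<^sub>1 (d\<^sub>2 z)) g" if z: "p z \<in> K" for z
  proof -
    obtain h\<^sub>2 where h\<^sub>2: "h\<^sub>2 \<in> W" "b z = act (d\<^sub>2 z) h\<^sub>2"
      using d\<^sub>2 z by (auto simp: mem_gauge_ball[OF pb])
    have "p (b z) \<in> K" using z gauge_group_over[OF G(2)] by metis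
    then obtain h\<^sub>1 where h\<^sub>1: "h\<^sub>1 \<in> W" "a (b z) = act (d\<^sub>1 (b z)) h\<^sub>1"
      using d\<^sub>1 by (auto simp: mem_gauge_ball[OF pb])
    have "d\<^sub>1 (b z) = act (d\<^sub>1 (d\<^sub>2 z)) h\<^sub>2" using h\<^sub>2(2) gauge_group_equivariant[OF G(3)] by metis
    then have "a (b z) = act (d\<^sub>1 (d\<^sub>2 z)) (h\<^sub>2 + h\<^sub>1)" using h\<^sub>1(2) principal_bundle_act_add[OF pb] by metis
    then show ?thesis using W h\<^sub>1(1) h\<^sub>2(1) by blast
  qed
  then show ?thesis using G by (simp add: mem_gauge_ball[OF pb] gauge_group_comp)
qed

lemma gauge_ball_inv:
  assumes pb: "principal_bundle p act" and V: "V \<in> VG" and d: "d \<in> gauge_ball p act c K V"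
  shows "inv d \<in> gauge_ball p act (inv c) K V"
proof -
  have G: "c \<in> gauge_group p act" "d \<in> gauge_group p act" using d by (auto simp: mem_gauge_ball[OF pb])
  have "\<exists>g\<in>V. inv c z = act (inv d z) g" if z: "p z \<in> K" for z
  proof -
    define w where "w = inv d z"
    have dw: "d w = z" unfolding w_def by (meson G(2) bij_inv_eq_iff gauge_group_bij)
    then have "p w \<in> K" using z gauge_group_over[OF G(2), of w] by simp
    then obtain h where h: "h \<in> V" "c w = act z h" using d dw by (auto simp: mem_gauge_ball[OF pb])
    have "c (act w (- h)) = z"
      using h(2) gauge_group_equivariant[OF G(1)] principal_bundle_act_add[OF pb]
        principal_bundle_act_0[OF pb] by simp
    then have "inv c z = act w (- h)" by (metis G(1) gauge_group_bij bij_is_inj inv_f_f)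
    moreover have "- h \<in> V" using h(1) V unfolding VG_def by blast
    ultimately show ?thesis unfolding w_def by blast
  qed
  then show ?thesis using G by (simp add: mem_gauge_ball[OF pb] gauge_group_inv)
qed

lemma gauge_ball_conj:
  assumes pb: "principal_bundle p act" and b: "b \<in> gauge_group p act"
    and c: "c \<in> gauge_ball p act id K V"
  shows "b \<circ> c \<circ> inv b \<in> gauge_ball p act id K V"
proof -
  have cG: "c \<in> gauge_group p act" using c by (auto simp: mem_gauge_ball[OF pb])
  have "\<exists>g\<in>V. z = act (b (c (inv b z))) g" if z: "p z \<in> K" for z
  proof -
    define w where "w = inv b z"
    have bw: "b w = z" unfolding w_def by (meson b bij_inv_eq_iff gauge_group_bij)
    then have "p w \<in> K" using z gauge_group_over[OF b, of w] by simp
    then obtain g where "g \<in> V" "w = act (c w) g" using c by (auto simp: mem_gauge_ball[OF pb])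
    then show ?thesis using bw gauge_group_equivariant[OF b] unfolding w_def by metis
  qed
  then show ?thesis
    using b cG by (simp add: mem_gauge_ball[OF pb] gauge_group_comp gauge_group_inv gauge_group_id)
qed

lemma istopology_gauge_open: "istopology (gauge_open p act)"
  unfolding istopology_def
proof (intro conjI allI impI)
  fix S T assume S: "gauge_open p act S" and T: "gauge_open p act T"
  have "\<exists>K V. compact K \<and> V \<in> VG \<and> gauge_ball p act c K V \<subseteq> S \<inter> T" if c: "c \<in> S \<inter> T" for c
  proof -
    obtain K V where KV: "compact K" "V \<in> VG" "gauge_ball p act c K V \<subseteq> S"
      using S c unfolding gauge_open_iff by blast
    obtain K' V' where KV': "compact K'" "V' \<in> VG" "gauge_ball p act c K' V' \<subseteq> T"
      using T c unfolding gauge_open_iff by blast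
    have "gauge_ball p act c (K \<union> K') (V \<inter> V') \<subseteq> S \<inter> T"
      using gauge_ball_mono[of K "K \<union> K'" "V \<inter> V'" V] gauge_ball_mono[of K' "K \<union> K'" "V \<inter> V'" V']
        KV(3) KV'(3) by blast
    moreover have "compact (K \<union> K')" "V \<inter> V' \<in> VG" using KV KV' VG_Int by auto
    ultimately show ?thesis by blast
  qed
  moreover have "S \<inter> T \<subseteq> gauge_group p act" using S unfolding gauge_open_iff by blast
  ultimately show "gauge_open p act (S \<inter> T)" unfolding gauge_open_iff by blast
next
  fix \<S> assume \<S>: "\<forall>S\<in>\<S>. gauge_open p act S"
  have "\<exists>K V. compact K \<and> V \<in> VG \<and> gauge_ball p act c K V \<subseteq> \<Union>\<S>" if S: "S \<in> \<S>" and c: "c \<in> S" for S c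
  proof -
    have "gauge_open p act S" using \<S> S by blast
    then obtain K V where "compact K" "V \<in> VG" "gauge_ball p act c K V \<subseteq> S"
      using c unfolding gauge_open_iff by blast
    moreover have "S \<subseteq> \<Union>\<S>" using S by blast
    ultimately show ?thesis by (intro exI[of _ K] exI[of _ V]) auto
  qed
  moreover have "\<Union>\<S> \<subseteq> gauge_group p act" using \<S> unfolding gauge_open_iff by blast
  ultimately show "gauge_open p act (\<Union>\<S>)" unfolding gauge_open_iff by blast
qed

lemma openin_gauge_topology: "openin (gauge_topology p act) = gauge_open p act"
  unfolding gauge_topology_def by (rule topology_inverse'[OF istopology_gauge_open])

lemma topspace_gauge_topology: "topspace (gauge_topology p act) = gauge_group p act"
proof -
  have "gauge_ball p act c {} UNIV \<subseteq> gauge_group p act" for c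
    unfolding gauge_ball_def gauge_entourage_def by auto
  then have "gauge_open p act (gauge_group p act)"
    unfolding gauge_open_iff using UNIV_in_VG compact_empty by blast
  then show ?thesis
    unfolding topspace_def openin_gauge_topology gauge_open_iff by blast
qed

lemma gauge_ball_open_neighbourhood:
  assumes pb: "principal_bundle p act"
    and "c \<in> gauge_group p act" "compact K" "V \<in> VG"
  shows "\<exists>U. openin (gauge_topology p act) U \<and> c \<in> U \<and> U \<subseteq> gauge_ball p act c K V"
proof -
  define U where "U = {d \<in> gauge_group p act. \<exists>K' V'. compact K' \<and> V' \<in> VG \<and>
      gauge_ball p act d K' V' \<subseteq> gauge_ball p act c K V}"
  have "gauge_open p act U"
    unfolding gauge_open_iff
  proof (intro conjI ballI)
    show "U \<subseteq> gauge_group p act" unfolding U_def by blast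
    fix d assume "d \<in> U"
    then obtain K' V' where d: "compact K'" "V' \<in> VG"
      "gauge_ball p act d K' V' \<subseteq> gauge_ball p act c K V"
      unfolding U_def by blast
    obtain W where W: "W \<in> VG" "\<forall>a\<in>W. \<forall>b\<in>W. a + b \<in> V'" using VG_halving[OF d(2)] by blast
    have "gauge_ball p act d K' W \<subseteq> U"
    proof
      fix e assume e: "e \<in> gauge_ball p act d K' W"
      then have "gauge_ball p act e K' W \<subseteq> gauge_ball p act c K V"
        using gauge_ball_trans[OF pb e _ W(2)] d(3) by blast
      moreover have "e \<in> gauge_group p act" using e by (simp add: mem_gauge_ball[OF pb])
      ultimately show "e \<in> U" using d(1) W(1) unfolding U_def by blast
    qed
    then show "\<exists>K V. compact K \<and> V \<in> VG \<and> gauge_ball p act d K V \<subseteq> U" using d(1) W(1) by blast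
  qed
  moreover have "c \<in> U" using assms unfolding U_def by blast
  moreover have "U \<subseteq> gauge_ball p act c K V"
    unfolding U_def using gauge_ball_self[OF pb] by blast
  ultimately show ?thesis by (auto simp: openin_gauge_topology)
qed

lemma continuous_map_into_gauge_topology:
  assumes maps: "f \<in> topspace X \<rightarrow> gauge_group p act"
    and nbhd: "\<And>x K V. x \<in> topspace X \<Longrightarrow> compact K \<Longrightarrow> V \<in> VG \<Longrightarrow>
       \<exists>U. openin X U \<and> x \<in> U \<and> (\<forall>y\<in>U. f y \<in> gauge_ball p act (f x) K V)"
  shows "continuous_map X (gauge_topology p act) f"
proof -
  have "topcontinuous_at X (gauge_topology p act) f x" if x: "x \<in> topspace X" for x
    unfolding topcontinuous_at_def topspace_gauge_topology
  proof (intro conjI allI impI x maps)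
    fix S assume "openin (gauge_topology p act) S \<and> f x \<in> S"
    then have "gauge_open p act S" "f x \<in> S" by (simp_all add: openin_gauge_topology)
    then obtain K V where KV: "compact K" "V \<in> VG" "gauge_ball p act (f x) K V \<subseteq> S"
      unfolding gauge_open_iff by blast
    obtain U where "openin X U" "x \<in> U" "\<forall>y\<in>U. f y \<in> gauge_ball p act (f x) K V"
      using nbhd[OF x KV(1,2)] by blast
    then show "\<exists>U. openin X U \<and> x \<in> U \<and> (\<forall>y\<in>U. f y \<in> S)" using KV(3) by blast
  qed
  then show ?thesis unfolding continuous_map_eq_topcontinuous_at by blast
qed

lemma continuous_map_gauge_comp:
  fixes p :: "'e::topological_space \<Rightarrow> 'x::topological_space"
    and act :: "'e \<Rightarrow> 'g::topological_group_add \<Rightarrow> 'e"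
  assumes pb: "principal_bundle p act"
  shows "continuous_map (prod_topology (gauge_topology p act) (gauge_topology p act))
           (gauge_topology p act) (\<lambda>(a, b). a \<circ> b)"
proof (rule continuous_map_into_gauge_topology)
  show "(\<lambda>(a, b). a \<circ> b) \<in> topspace (prod_topology (gauge_topology p act) (gauge_topology p act))
          \<rightarrow> gauge_group p act"
    by (auto simp: topspace_gauge_topology gauge_group_comp)
  fix x and K :: "'x set" and V :: "'g set"
  assume x: "x \<in> topspace (prod_topology (gauge_topology p act) (gauge_topology p act))"
    and K: "compact K" and V: "V \<in> VG"
  obtain a b where ab: "x = (a, b)" "a \<in> gauge_group p act" "b \<in> gauge_group p act"
    using x by (auto simp: topspace_gauge_topology)
  obtain W where W: "W \<in> VG" "\<forall>g\<in>W. \<forall>h\<in>W. g + h \<in> V"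
    using VG_halving[OF V] by blast
  obtain U\<^sub>1 where U\<^sub>1: "openin (gauge_topology p act) U\<^sub>1" "a \<in> U\<^sub>1" "U\<^sub>1 \<subseteq> gauge_ball p act a K W"
    using gauge_ball_open_neighbourhood[OF pb ab(2) K W(1)] by blast
  obtain U\<^sub>2 where U\<^sub>2: "openin (gauge_topology p act) U\<^sub>2" "b \<in> U\<^sub>2" "U\<^sub>2 \<subseteq> gauge_ball p act b K W"
    using gauge_ball_open_neighbourhood[OF pb ab(3) K W(1)] by blast
  have "openin (prod_topology (gauge_topology p act) (gauge_topology p act)) (U\<^sub>1 \<times> U\<^sub>2)"
    using U\<^sub>1(1) U\<^sub>2(1) by (simp add: openin_prod_Times_iff)
  moreover have "d\<^sub>1 \<circ> d\<^sub>2 \<in> gauge_ball p act (a \<circ> b) K V" if "d\<^sub>1 \<in> U\<^sub>1" "d\<^sub>2 \<in> U\<^sub>2" for d\<^sub>1 d\<^sub>2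
    using gauge_ball_comp[OF pb _ _ W(2)] U\<^sub>1(3) U\<^sub>2(3) that by blast
  ultimately show "\<exists>U. openin (prod_topology (gauge_topology p act) (gauge_topology p act)) U \<and> x \<in> U \<and>
      (\<forall>y\<in>U. (case y of (a, b) \<Rightarrow> a \<circ> b) \<in> gauge_ball p act (case x of (a, b) \<Rightarrow> a \<circ> b) K V)"
    using ab(1) U\<^sub>1(2) U\<^sub>2(2) by (intro exI[of _ "U\<^sub>1 \<times> U\<^sub>2"]) auto
qed

lemma continuous_map_gauge_inv:
  fixes p :: "'e::topological_space \<Rightarrow> 'x::topological_space"
    and act :: "'e \<Rightarrow> 'g::topological_group_add \<Rightarrow> 'e"
  assumes pb: "principal_bundle p act"
  shows "continuous_map (gauge_topology p act) (gauge_topology p act) inv"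
proof (rule continuous_map_into_gauge_topology)
  show "inv \<in> topspace (gauge_topology p act) \<rightarrow> gauge_group p act"
    by (auto simp: topspace_gauge_topology gauge_group_inv)
  fix c and K :: "'x set" and V :: "'g set"
  assume "c \<in> topspace (gauge_topology p act)" "compact K" and V: "V \<in> VG"
  then obtain U where "openin (gauge_topology p act) U" "c \<in> U" "U \<subseteq> gauge_ball p act c K V"
    using gauge_ball_open_neighbourhood[OF pb] by (metis topspace_gauge_topology)
  then show "\<exists>U. openin (gauge_topology p act) U \<and> c \<in> U \<and>
      (\<forall>d\<in>U. inv d \<in> gauge_ball p act (inv c) K V)"
    using gauge_ball_inv[OF pb V] by blast
qed

lemma topological_group_gauge_topology:
  assumes "principal_bundle p act"
  shows "topological_group_on (gauge_topology p act) (\<circ>) inv id"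
  unfolding topological_group_on_def topspace_gauge_topology
proof (intro conjI ballI)
  fix a assume "a \<in> gauge_group p act"
  then have "bij a" by (rule gauge_group_bij)
  then show "id \<circ> a = a" "a \<circ> id = a" "inv a \<circ> a = id" "a \<circ> inv a = id"
    by (simp_all add: bij_is_inj) (metis bij_is_surj surj_iff)
qed (auto simp: gauge_group_id continuous_map_gauge_comp continuous_map_gauge_inv assms)

lemma SIN_gauge_topology:
  assumes pb: "principal_bundle p act"
  shows "SIN_on (gauge_topology p act) (\<circ>) inv id"
  unfolding SIN_on_def
proof (intro allI impI)
  fix N assume "nbhd_of (gauge_topology p act) id N"
  then obtain K V where KV: "compact K" "V \<in> VG" "gauge_ball p act id K V \<subseteq> N"
    unfolding nbhd_of_def openin_gauge_topology gauge_open_iff by blast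
  define W where "W = gauge_ball p act id K V"
  have "nbhd_of (gauge_topology p act) id W"
    unfolding nbhd_of_def W_def using gauge_ball_open_neighbourhood[OF pb gauge_group_id KV(1,2)] .
  moreover have "(\<lambda>c. b \<circ> c \<circ> inv b) ` W = W" if b: "b \<in> gauge_group p act" for b
  proof
    show "(\<lambda>c. b \<circ> c \<circ> inv b) ` W \<subseteq> W"
      unfolding W_def using gauge_ball_conj[OF pb b] by blast
    have "c = b \<circ> (inv b \<circ> c \<circ> inv (inv b)) \<circ> inv b" for c
      using gauge_group_bij[OF b] by (simp add: fun_eq_iff bij_is_surj surj_f_inv_f inv_inv_eq)
    then show "W \<subseteq> (\<lambda>c. b \<circ> c \<circ> inv b) ` W"
      unfolding W_def using gauge_ball_conj[OF pb gauge_group_inv[OF b]] by blast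
  qed
  ultimately show "\<exists>W. nbhd_of (gauge_topology p act) id W \<and> W \<subseteq> N \<and>
      (\<forall>g\<in>topspace (gauge_topology p act). (\<lambda>w. g \<circ> w \<circ> inv g) ` W = W)"
    using KV(3) unfolding W_def topspace_gauge_topology by blast
qed

theorem proposition3p1:
  fixes p :: "'e::topological_space \<Rightarrow> 'x::topological_space"
    and act :: "'e \<Rightarrow> 'g::topological_group_add \<Rightarrow> 'e"
  assumes "SIN_on (euclidean :: 'g topology) (+) uminus 0"
    and "numerable_principal_bundle p act"
  shows "istopology (gauge_open p act) \<and>
         topspace (gauge_topology p act) = gauge_group p act \<and>
         topological_group_on (gauge_topology p act) (\<circ>) inv id \<and>
         SIN_on (gauge_topology p act) (\<circ>) inv id"
proof -
  have "principal_bundle p act"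
    using assms(2) unfolding numerable_principal_bundle_def by blast
  then show ?thesis
    using istopology_gauge_open topspace_gauge_topology
      topological_group_gauge_topology SIN_gauge_topology by blast
qed

end
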